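(* For integers $m\ge 2$ and $n\ge 2$, let $m_0=\min\{k\in\mathbb{N} : m\le \tfrac12(k^3-k^2)\}$ and $n_0=\min\{k\in\mathbb{N}: n\le\tfrac12(k^3-k^2)\}$. Then $\chi_L(P_m+P_n)=m_0+n_0$.
   Context: All graphs are finite and simple. $P_n$ is the path on $n$ vertices. A proper $k$-coloring of $G$ is a map from $V(G)$ onto $[k]=\{1,\dots,k\}$ with adjacent vertices receiving different colors. For a connected graph $G$ with proper $k$-coloring $f$ and color classes $V_i=f^{-1}(i)$, the color code of $v$ is $(d(v,V_1),\dots,d(v,V_k))$ where $d(v,S)=\min_{x\in S}d(v,x)$; $f$ is a locating coloring if distinct vertices have distinct color codes, and $\chi_L(G)$ is the minimum number of colors in a locating coloring of $G$. The join $G_1+G_2$ is the disjoint union of $G_1$ and $G_2$ together with all edges joining a vertex of $G_1$ to a vertex of $G_2$. *)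

theory Defs
  imports Main "HOL-Library.Extended_Nat"
begin

text \<open>A finite simple graph is given by a vertex set V and a symmetric,
irreflexive adjacency relation E (only its restriction to V matters).\<close>

definition simple_graph :: "'a set \<Rightarrow> ('a \<Rightarrow> 'a \<Rightarrow> bool) \<Rightarrow> bool" where
  "simple_graph V E \<longleftrightarrow> finite V \<and> (\<forall>x y. E x y \<longrightarrow> E y x) \<and> (\<forall>x. \<not> E x x)"

fun walk :: "'a set \<Rightarrow> ('a \<Rightarrow> 'a \<Rightarrow> bool) \<Rightarrow> 'a list \<Rightarrow> bool" where
  "walk V E [] = False"
| "walk V E [x] = (x \<in> V)"
| "walk V E (x # y # xs) = (x \<in> V \<and> E x y \<and> walk V E (y # xs))"

definition connected_graph :: "'a set \<Rightarrow> ('a \<Rightarrow> 'a \<Rightarrow> bool) \<Rightarrow> bool" where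
  "connected_graph V E \<longleftrightarrow> V \<noteq> {} \<and>
     (\<forall>u\<in>V. \<forall>v\<in>V. \<exists>xs. walk V E xs \<and> hd xs = u \<and> last xs = v)"

definition gdist :: "'a set \<Rightarrow> ('a \<Rightarrow> 'a \<Rightarrow> bool) \<Rightarrow> 'a \<Rightarrow> 'a \<Rightarrow> nat" where
  "gdist V E u v = (LEAST n. \<exists>xs. walk V E xs \<and> hd xs = u \<and> last xs = v \<and> length xs = n + 1)"

definition setdist :: "'a set \<Rightarrow> ('a \<Rightarrow> 'a \<Rightarrow> bool) \<Rightarrow> 'a \<Rightarrow> 'a set \<Rightarrow> nat" where
  "setdist V E v S = Min (gdist V E v ` S)"

definition proper_coloring :: "'a set \<Rightarrow> ('a \<Rightarrow> 'a \<Rightarrow> bool) \<Rightarrow> nat \<Rightarrow> ('a \<Rightarrow> nat) \<Rightarrow> bool" where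
  "proper_coloring V E k f \<longleftrightarrow> f ` V = {1..k} \<and>
     (\<forall>u\<in>V. \<forall>v\<in>V. E u v \<longrightarrow> f u \<noteq> f v)"

definition color_class :: "'a set \<Rightarrow> ('a \<Rightarrow> nat) \<Rightarrow> nat \<Rightarrow> 'a set" where
  "color_class V f i = {x \<in> V. f x = i}"

definition color_code :: "'a set \<Rightarrow> ('a \<Rightarrow> 'a \<Rightarrow> bool) \<Rightarrow> nat \<Rightarrow> ('a \<Rightarrow> nat) \<Rightarrow> 'a \<Rightarrow> nat list" where
  "color_code V E k f v = map (\<lambda>i. setdist V E v (color_class V f i)) [1..<k+1]"

definition locating_coloring :: "'a set \<Rightarrow> ('a \<Rightarrow> 'a \<Rightarrow> bool) \<Rightarrow> nat \<Rightarrow> ('a \<Rightarrow> nat) \<Rightarrow> bool" where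
  "locating_coloring V E k f \<longleftrightarrow> proper_coloring V E k f \<and> inj_on (color_code V E k f) V"

definition locating_chromatic_number :: "'a set \<Rightarrow> ('a \<Rightarrow> 'a \<Rightarrow> bool) \<Rightarrow> nat" where
  "locating_chromatic_number V E = (LEAST k. \<exists>f. locating_coloring V E k f)"

definition path_V :: "nat \<Rightarrow> nat set" where
  "path_V n = {0..<n}"

definition path_E :: "nat \<Rightarrow> nat \<Rightarrow> bool" where
  "path_E i j \<longleftrightarrow> i + 1 = j \<or> j + 1 = i"

definition join_V :: "'a set \<Rightarrow> 'b set \<Rightarrow> ('a + 'b) set" where
  "join_V V1 V2 = Inl ` V1 \<union> Inr ` V2"

fun join_E :: "('a \<Rightarrow> 'a \<Rightarrow> bool) \<Rightarrow> ('b \<Rightarrow> 'b \<Rightarrow> bool) \<Rightarrow> ('a + 'b) \<Rightarrow> ('a + 'b) \<Rightarrow> bool" where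
  "join_E E1 E2 (Inl x) (Inl y) = E1 x y"
| "join_E E1 E2 (Inr x) (Inr y) = E2 x y"
| "join_E E1 E2 (Inl x) (Inr y) = True"
| "join_E E1 E2 (Inr x) (Inl y) = True"

end

theory Submission
  imports Defs "HOL-Combinatorics.Transposition"
begin

text \<open>Every vertex of one path is adjacent to every vertex of the other, so the join has diameter
  two and its two sides use disjoint sets of colours. In diameter two, a colouring is locating
  iff every vertex is determined by its colour together with the set of colours of its
  neighbours; in the join this only has to be checked inside each path. On a path coloured with
  \<open>t\<close> colours such a pair is a colour and a set of one or two other colours, and there are
  \<open>t\<^sup>2(t-1)/2\<close> of them, whence \<open>m \<le> (t\<^sup>3 - t\<^sup>2)/2\<close> and at least \<open>m\<^sub>0 + n\<^sub>0\<close> colours are needed.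

  Conversely, words with distinct (letter, neighbouring letters) pairs exist over \<open>k\<close> letters for
  every length up to \<open>(k\<^sup>3 - k\<^sup>2)/2\<close>. Passing from \<open>k\<close> to \<open>k + 1\<close> letters, the new letter is woven
  into a tour through all unordered pairs of old letters, and an old word is appended: the
  triples centred at the new letter are indexed by the bridges between consecutive pairs of the
  tour, the other new triples by the pairs themselves.\<close>

section \<open>Colourings of graphs of diameter two\<close>

definition neighbours :: "'a set \<Rightarrow> ('a \<Rightarrow> 'a \<Rightarrow> bool) \<Rightarrow> 'a \<Rightarrow> 'a set" where
  "neighbours V E v = {u \<in> V. E v u}"

definition diameter_le_two :: "'a set \<Rightarrow> ('a \<Rightarrow> 'a \<Rightarrow> bool) \<Rightarrow> bool" where
  "diameter_le_two V E \<longleftrightarrow>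
     (\<forall>u\<in>V. \<forall>w\<in>V. u \<noteq> w \<longrightarrow> \<not> E u w \<longrightarrow> (\<exists>x\<in>V. E u x \<and> E x w))"

definition nbr_locating :: "'a set \<Rightarrow> ('a \<Rightarrow> 'a \<Rightarrow> bool) \<Rightarrow> ('a \<Rightarrow> nat) \<Rightarrow> bool" where
  "nbr_locating V E g \<longleftrightarrow> (\<forall>u\<in>V. \<forall>v\<in>V. E u v \<longrightarrow> g u \<noteq> g v) \<and>
     inj_on (\<lambda>v. (g v, g ` neighbours V E v)) V"

lemma walk_length_one: "walk V E xs \<Longrightarrow> length xs = 1 \<Longrightarrow> hd xs = last xs"
  by (cases xs) auto

lemma walk_length_two: "walk V E xs \<Longrightarrow> length xs = 2 \<Longrightarrow> E (hd xs) (last xs)"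
  by (cases xs rule: remdups_adj.cases) auto

lemma gdist_diameter_le_two:
  assumes "diameter_le_two V E" and u: "u \<in> V" and v: "v \<in> V"
  shows "gdist V E u v = (if u = v then 0 else if E u v then 1 else 2)"
proof -
  let ?P = "\<lambda>n. \<exists>xs. walk V E xs \<and> hd xs = u \<and> last xs = v \<and> length xs = n + 1"
  have P0: "u = v" if "?P y" "y = 0" for y using that walk_length_one by fastforce
  have P1: "E u v" if "?P y" "y = 1" for y using that walk_length_two[of V E] by (metis one_add_one)
  consider "u = v" | "u \<noteq> v" "E u v" | "u \<noteq> v" "\<not> E u v" by blast
  then show ?thesis
  proof cases
    case 1
    have "?P 0" by (rule exI[of _ "[u]"]) (simp add: u v 1)
    then show ?thesis unfolding gdist_def using 1 by (intro Least_equality) auto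
  next
    case 2
    have "?P 1" by (rule exI[of _ "[u,v]"]) (simp add: u v 2)
    moreover have "1 \<le> y" if "?P y" for y
    proof -
      have "y \<noteq> 0" using P0 2 that by blast
      then show ?thesis by simp
    qed
    ultimately show ?thesis unfolding gdist_def using 2 by (intro Least_equality) auto
  next
    case 3
    obtain w where "w \<in> V" "E u w" "E w v"
      using assms 3 by (auto simp: diameter_le_two_def)
    then have "?P 2" by (intro exI[of _ "[u,w,v]"]) (simp add: u v)
    moreover have "2 \<le> y" if "?P y" for y
    proof -
      have "y \<noteq> 0" "y \<noteq> 1" using P0 P1 3 that by blast+
      then show ?thesis by simp
    qed
    ultimately show ?thesis unfolding gdist_def using 3 by (intro Least_equality) auto
  qed
qed

lemma setdist_diameter_le_two:
  assumes "diameter_le_two V E" "v \<in> V" "S \<subseteq> V" "S \<noteq> {}" "finite S"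
  shows "setdist V E v S = (if v \<in> S then 0 else if \<exists>u\<in>S. E v u then 1 else 2)"
proof -
  have d: "gdist V E v u = (if v = u then 0 else if E v u then 1 else 2)" if "u \<in> S" for u
    using assms that by (intro gdist_diameter_le_two) auto
  obtain u0 where "u0 \<in> S" using assms(4) by blast
  show ?thesis
    unfolding setdist_def
  proof (rule Min_eqI)
    show "(if v \<in> S then 0 else if \<exists>u\<in>S. E v u then 1 else 2) \<in> gdist V E v ` S"
      using d \<open>u0 \<in> S\<close> by (auto simp: image_iff)
  qed (use assms(5) d in auto)
qed

definition code_entry :: "nat \<Rightarrow> nat set \<Rightarrow> nat \<Rightarrow> nat" where
  "code_entry c S i = (if i = c then 0 else if i \<in> S then 1 else 2)"

lemma color_code_diameter_le_two:
  assumes "diameter_le_two V E" "finite V" "proper_coloring V E k f" "v \<in> V"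
  shows "color_code V E k f v = map (code_entry (f v) (f ` neighbours V E v)) [1..<k+1]"
  unfolding color_code_def
proof (rule map_cong)
  fix i assume "i \<in> set [1..<k+1]"
  then have "i \<in> f ` V" using assms(3) by (auto simp: proper_coloring_def)
  then have "color_class V f i \<noteq> {}" by (auto simp: color_class_def)
  then have "setdist V E v (color_class V f i) = (if v \<in> color_class V f i then 0
      else if \<exists>u\<in>color_class V f i. E v u then 1 else 2)"
    using assms by (intro setdist_diameter_le_two) (auto simp: color_class_def)
  then show "setdist V E v (color_class V f i) = code_entry (f v) (f ` neighbours V E v) i"
    using assms(4) by (auto simp: color_class_def neighbours_def code_entry_def)
qed simp

lemma code_entries_eqD:
  assumes "c \<in> {1..k}" "c \<notin> S" "S \<subseteq> {1..k}" "c' \<in> {1..k}" "c' \<notin> S'" "S' \<subseteq> {1..k}"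
    and eq: "map (code_entry c S) [1..<k+1] = map (code_entry c' S') [1..<k+1]"
  shows "c = c'" "S = S'"
proof -
  have "set [1..<k+1] = {1..k}" by auto
  then have entry: "code_entry c S i = code_entry c' S' i" if "i \<in> {1..k}" for i
    using eq that unfolding map_eq_conv by blast
  show "c = c'" using entry[of c] assms(1) by (simp add: code_entry_def split: if_splits)
  then have "i \<in> S \<longleftrightarrow> i \<in> S'" if "i \<in> {1..k}" for i
    using entry[OF that] assms(2,5) by (auto simp: code_entry_def split: if_splits)
  then show "S = S'" using assms(3,6) by blast
qed

lemma locating_coloring_iff_nbr_locating:
  assumes "diameter_le_two V E" "finite V" "proper_coloring V E k f"
  shows "locating_coloring V E k f \<longleftrightarrow> nbr_locating V E f"
proof -
  have range: "f v \<in> {1..k}" "f v \<notin> f ` neighbours V E v" "f ` neighbours V E v \<subseteq> {1..k}"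
    if "v \<in> V" for v
    using assms(3) that by (auto simp: proper_coloring_def neighbours_def)
  have "color_code V E k f v = color_code V E k f w \<longleftrightarrow>
      (f v, f ` neighbours V E v) = (f w, f ` neighbours V E w)" if "v \<in> V" "w \<in> V" for v w
    using color_code_diameter_le_two[OF assms] code_entries_eqD[OF range[OF that(1)] range[OF that(2)]]
      that by auto
  then show ?thesis
    using assms(3) unfolding locating_coloring_def nbr_locating_def proper_coloring_def inj_on_def
    by auto
qed

section \<open>Joins\<close>

lemma finite_join_V: "finite V1 \<Longrightarrow> finite V2 \<Longrightarrow> finite (join_V V1 V2)"
  by (simp add: join_V_def)

lemma join_V_iff [simp]:
  "Inl v \<in> join_V V1 V2 \<longleftrightarrow> v \<in> V1" "Inr w \<in> join_V V1 V2 \<longleftrightarrow> w \<in> V2"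
  by (auto simp: join_V_def)

lemma neighbours_join_Inl:
  "neighbours (join_V V1 V2) (join_E E1 E2) (Inl v) = Inl ` neighbours V1 E1 v \<union> Inr ` V2"
  by (auto simp: neighbours_def join_V_def)

lemma neighbours_join_Inr:
  "neighbours (join_V V1 V2) (join_E E1 E2) (Inr v) = Inr ` neighbours V2 E2 v \<union> Inl ` V1"
  by (auto simp: neighbours_def join_V_def)

lemma diameter_le_two_join:
  assumes "V1 \<noteq> {}" "V2 \<noteq> {}"
  shows "diameter_le_two (join_V V1 V2) (join_E E1 E2)"
proof -
  obtain v1 v2 where "v1 \<in> V1" "v2 \<in> V2" using assms by blast
  then have "\<exists>x\<in>join_V V1 V2. join_E E1 E2 u x \<and> join_E E1 E2 x w"
    if "\<not> join_E E1 E2 u w" for u w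
    using that by (cases u; cases w) (auto intro: bexI[of _ "Inl v1"] bexI[of _ "Inr v2"])
  then show ?thesis by (auto simp: diameter_le_two_def)
qed

lemma locating_coloring_join_split:
  assumes fin: "finite V1" "finite V2" and ne: "V1 \<noteq> {}" "V2 \<noteq> {}"
    and loc: "locating_coloring (join_V V1 V2) (join_E E1 E2) k f"
  shows "nbr_locating V1 E1 (f \<circ> Inl)" "nbr_locating V2 E2 (f \<circ> Inr)"
    "card ((f \<circ> Inl) ` V1) + card ((f \<circ> Inr) ` V2) = k"
proof -
  let ?V = "join_V V1 V2" and ?E = "join_E E1 E2"
  have pc: "proper_coloring ?V ?E k f" using loc by (simp add: locating_coloring_def)
  have nl: "nbr_locating ?V ?E f"
    using loc locating_coloring_iff_nbr_locating[OF diameter_le_two_join[OF ne] finite_join_V[OF fin] pc]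
    by simp
  then have inj: "inj_on (\<lambda>v. (f v, f ` neighbours ?V ?E v)) ?V" and
    proper: "\<And>u v. u \<in> ?V \<Longrightarrow> v \<in> ?V \<Longrightarrow> ?E u v \<Longrightarrow> f u \<noteq> f v"
    by (auto simp: nbr_locating_def)
  show "nbr_locating V1 E1 (f \<circ> Inl)"
    unfolding nbr_locating_def
  proof (intro conjI ballI impI inj_onI)
    fix v w assume "v \<in> V1" "w \<in> V1"
      and "((f \<circ> Inl) v, (f \<circ> Inl) ` neighbours V1 E1 v) = ((f \<circ> Inl) w, (f \<circ> Inl) ` neighbours V1 E1 w)"
    then have "Inl v = (Inl w :: _ + 'b)"
      by (intro inj_onD[OF inj]) (auto simp: neighbours_join_Inl image_Un image_comp)
    then show "v = w" by simp
  qed (use proper in auto)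
  show "nbr_locating V2 E2 (f \<circ> Inr)"
    unfolding nbr_locating_def
  proof (intro conjI ballI impI inj_onI)
    fix v w assume "v \<in> V2" "w \<in> V2"
      and "((f \<circ> Inr) v, (f \<circ> Inr) ` neighbours V2 E2 v) = ((f \<circ> Inr) w, (f \<circ> Inr) ` neighbours V2 E2 w)"
    then have "Inr v = (Inr w :: 'a + _)"
      by (intro inj_onD[OF inj]) (auto simp: neighbours_join_Inr image_Un image_comp)
    then show "v = w" by simp
  qed (use proper in auto)
  have "(f \<circ> Inl) ` V1 \<union> (f \<circ> Inr) ` V2 = {1..k}"
    using pc by (auto simp: proper_coloring_def join_V_def image_Un image_comp)
  moreover have "(f \<circ> Inl) ` V1 \<inter> (f \<circ> Inr) ` V2 = {}"
    using proper[of "Inl _" "Inr _"] by auto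
  ultimately show "card ((f \<circ> Inl) ` V1) + card ((f \<circ> Inr) ` V2) = k"
    using card_Un_disjoint[of "(f \<circ> Inl) ` V1" "(f \<circ> Inr) ` V2"] fin by simp
qed

lemma nbr_locating_join:
  assumes g1: "nbr_locating V1 E1 g1" "g1 ` V1 \<subseteq> {..a}"
    and g2: "nbr_locating V2 E2 g2" "g2 ` V2 \<subseteq> {1..}"
  shows "nbr_locating (join_V V1 V2) (join_E E1 E2) (case_sum g1 (\<lambda>v. a + g2 v))"
proof -
  let ?V = "join_V V1 V2" and ?E = "join_E E1 E2" and ?f = "case_sum g1 (\<lambda>v. a + g2 v)"
  have low: "g1 v \<le> a" if "v \<in> V1" for v using g1(2) that by auto
  have high: "a < a + g2 v" if "v \<in> V2" for v using g2(2) that by force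
  have left: "?f ` neighbours ?V ?E (Inl x) \<inter> {..a} = g1 ` neighbours V1 E1 x" for x
  proof -
    have "?f ` neighbours ?V ?E (Inl x) = g1 ` neighbours V1 E1 x \<union> (\<lambda>v. a + g2 v) ` V2"
      by (simp add: neighbours_join_Inl image_Un image_comp comp_def)
    moreover have "g1 ` neighbours V1 E1 x \<subseteq> {..a}" using low by (auto simp: neighbours_def)
    moreover have "(\<lambda>v. a + g2 v) ` V2 \<inter> {..a} = {}" using high by fastforce
    ultimately show ?thesis by blast
  qed
  have right: "?f ` neighbours ?V ?E (Inr y) \<inter> {a<..} = (\<lambda>v. a + g2 v) ` neighbours V2 E2 y" for y
  proof -
    have "?f ` neighbours ?V ?E (Inr y) = (\<lambda>v. a + g2 v) ` neighbours V2 E2 y \<union> g1 ` V1"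
      by (simp add: neighbours_join_Inr image_Un image_comp comp_def)
    moreover have "(\<lambda>v. a + g2 v) ` neighbours V2 E2 y \<subseteq> {a<..}"
      using high by (auto simp: neighbours_def)
    moreover have "g1 ` V1 \<inter> {a<..} = {}" using low by fastforce
    ultimately show ?thesis by blast
  qed
  have "?f u \<noteq> ?f v" if "u \<in> ?V" "v \<in> ?V" "?E u v" for u v
    using that g1(1) g2(1) low high
    by (cases u; cases v) (auto simp: nbr_locating_def join_V_def; fastforce)+
  moreover have "u = v"
    if "u \<in> ?V" "v \<in> ?V" "?f u = ?f v" "?f ` neighbours ?V ?E u = ?f ` neighbours ?V ?E v" for u v
  proof (cases u; cases v)
    fix x y assume uv: "u = Inl x" "v = Inl y"
    then have "g1 ` neighbours V1 E1 x = g1 ` neighbours V1 E1 y" using that(4) left by metis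
    then show ?thesis using that g1(1) uv by (auto simp: nbr_locating_def inj_on_def)
  next
    fix x y assume uv: "u = Inr x" "v = Inr y"
    then have "plus a ` g2 ` neighbours V2 E2 x = plus a ` g2 ` neighbours V2 E2 y"
      using that(4) right by (metis image_image)
    then have "g2 ` neighbours V2 E2 x = g2 ` neighbours V2 E2 y"
      by (simp add: inj_image_eq_iff)
    then show ?thesis using that g2(1) uv by (auto simp: nbr_locating_def inj_on_def)
  qed (use that low high in force)+
  ultimately show ?thesis by (auto simp: nbr_locating_def inj_on_def)
qed

lemma locating_coloring_join_combine:
  assumes fin: "finite V1" "finite V2" and ne: "V1 \<noteq> {}" "V2 \<noteq> {}"
    and g1: "nbr_locating V1 E1 g1" "g1 ` V1 = {1..a}"
    and g2: "nbr_locating V2 E2 g2" "g2 ` V2 = {1..b}"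
  shows "locating_coloring (join_V V1 V2) (join_E E1 E2) (a + b) (case_sum g1 (\<lambda>v. a + g2 v))"
proof -
  let ?V = "join_V V1 V2" and ?E = "join_E E1 E2" and ?f = "case_sum g1 (\<lambda>v. a + g2 v)"
  have nl: "nbr_locating ?V ?E ?f" using g1 g2 by (intro nbr_locating_join) auto
  have "(\<lambda>v. a + g2 v) ` V2 = plus a ` g2 ` V2" by (simp add: image_image)
  then have "?f ` ?V = g1 ` V1 \<union> plus a ` {1..b}"
    using g2(2) by (auto simp: join_V_def image_Un image_comp)
  also have "\<dots> = {1..a + b}" using g1(2) by (auto simp: add.commute)
  finally have "proper_coloring ?V ?E (a + b) ?f"
    using nl by (simp add: proper_coloring_def nbr_locating_def)
  then show ?thesis
    using nl locating_coloring_iff_nbr_locating[OF diameter_le_two_join[OF ne] finite_join_V[OF fin]]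
    by blast
qed

section \<open>Counting neighbour-locating colourings\<close>

lemma card_small_subsets:
  assumes "finite X"
  shows "card {S. S \<subseteq> X \<and> (card S = 1 \<or> card S = 2)} = card X + (card X choose 2)"
proof -
  have fin: "finite {S. S \<subseteq> X \<and> card S = k}" for k
    by (rule finite_subset[of _ "Pow X"]) (use assms in auto)
  have "{S. S \<subseteq> X \<and> (card S = 1 \<or> card S = 2)} = {S. S \<subseteq> X \<and> card S = 1} \<union> {S. S \<subseteq> X \<and> card S = 2}"
    by (simp only: conj_disj_distribL Collect_disj_eq)
  also have "card \<dots> = card {S. S \<subseteq> X \<and> card S = 1} + card {S. S \<subseteq> X \<and> card S = 2}"
    by (rule card_Un_disjoint[OF fin fin]) auto
  finally show ?thesis using n_subsets[OF assms, of 1] n_subsets[OF assms, of 2] by simp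
qed

lemma two_times_choose_two: "2 * (n choose 2) = n * (n - 1)"
proof (induction n)
  case (Suc n)
  have "Suc n choose 2 = n + (n choose 2)"
    using binomial_Suc_Suc[of n 1] by (simp add: numeral_2_eq_2)
  then show ?case using Suc by (cases n) (auto simp: algebra_simps)
qed simp

lemma card_colour_nbr_pairs:
  assumes "finite A"
  shows "2 * card (SIGMA c:A. {S. S \<subseteq> A - {c} \<and> (card S = 1 \<or> card S = 2)})
    = card A ^ 2 * (card A - 1)"
proof -
  let ?t = "card A"
  have "finite {S. S \<subseteq> A - {c} \<and> (card S = 1 \<or> card S = 2)}" for c
    by (rule finite_subset[of _ "Pow A"]) (use assms in auto)
  then have "card (SIGMA c:A. {S. S \<subseteq> A - {c} \<and> (card S = 1 \<or> card S = 2)})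
      = (\<Sum>c\<in>A. card {S. S \<subseteq> A - {c} \<and> (card S = 1 \<or> card S = 2)})"
    using assms by simp
  also have "\<dots> = (\<Sum>c\<in>A. (?t - 1) + ((?t - 1) choose 2))"
  proof (rule sum.cong[OF refl])
    fix c assume "c \<in> A"
    then show "card {S. S \<subseteq> A - {c} \<and> (card S = 1 \<or> card S = 2)} = (?t - 1) + ((?t - 1) choose 2)"
      using card_small_subsets[of "A - {c}"] assms by simp
  qed
  also have "\<dots> = ?t * ((?t - 1) + ((?t - 1) choose 2))" by simp
  finally have "2 * card (SIGMA c:A. {S. S \<subseteq> A - {c} \<and> (card S = 1 \<or> card S = 2)})
      = ?t * (2 * (?t - 1) + 2 * ((?t - 1) choose 2))"
    by (simp only: distrib_left mult.left_commute)
  also have "\<dots> = ?t * (2 * (?t - 1) + (?t - 1) * (?t - 2))"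
    by (simp only: two_times_choose_two diff_diff_left one_add_one)
  also have "\<dots> = ?t ^ 2 * (?t - 1)"
    by (cases "?t" rule: nat.exhaust[case_product nat.exhaust])
      (simp_all add: power2_eq_square algebra_simps)
  finally show ?thesis .
qed

lemma nbr_locating_card_bound:
  assumes fin: "finite V" and nl: "nbr_locating V E g"
    and deg: "\<And>v. v \<in> V \<Longrightarrow> neighbours V E v \<noteq> {} \<and> card (neighbours V E v) \<le> 2"
  shows "2 * card V \<le> card (g ` V) ^ 2 * (card (g ` V) - 1)"
proof -
  let ?F = "SIGMA c:g ` V. {S. S \<subseteq> g ` V - {c} \<and> (card S = 1 \<or> card S = 2)}"
  have "(g v, g ` neighbours V E v) \<in> ?F" if v: "v \<in> V" for v
  proof -
    have N: "neighbours V E v \<subseteq> V" "finite (neighbours V E v)"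
      using fin by (auto simp: neighbours_def intro: rev_finite_subset)
    have "g ` neighbours V E v \<subseteq> g ` V - {g v}"
      using nl v by (force simp: nbr_locating_def neighbours_def)
    moreover have "card (g ` neighbours V E v) \<le> 2"
      using deg[OF v] card_image_le[OF N(2), of g] by linarith
    moreover have "card (g ` neighbours V E v) \<noteq> 0"
      using deg[OF v] N(2) by simp
    ultimately show ?thesis using v by auto
  qed
  then have "(\<lambda>v. (g v, g ` neighbours V E v)) ` V \<subseteq> ?F" by blast
  then have "card V \<le> card ?F"
    using nl fin by (intro card_inj_on_le) (auto simp: nbr_locating_def)
  then show ?thesis using card_colour_nbr_pairs[of "g ` V"] fin by simp
qed

lemma neighbours_path: "neighbours (path_V m) path_E i = {j. j < m \<and> (j = i + 1 \<or> j + 1 = i)}"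
  by (auto simp: neighbours_def path_V_def path_E_def)

lemma path_degree:
  assumes "2 \<le> m" "i < m"
  shows "neighbours (path_V m) path_E i \<noteq> {} \<and> card (neighbours (path_V m) path_E i) \<le> 2"
proof
  have "i + 1 \<in> neighbours (path_V m) path_E i \<or> i - 1 \<in> neighbours (path_V m) path_E i"
    using assms by (auto simp: neighbours_path)
  then show "neighbours (path_V m) path_E i \<noteq> {}" by blast
  have "card (neighbours (path_V m) path_E i) \<le> card {i + 1, i - 1}"
    by (rule card_mono) (auto simp: neighbours_path)
  also have "\<dots> \<le> 2" by (simp add: card_insert_if)
  finally show "card (neighbours (path_V m) path_E i) \<le> 2" .
qed

corollary nbr_locating_path_card_bound:
  assumes "2 \<le> m" "nbr_locating (path_V m) path_E g"
  shows "2 * m \<le> card (g ` path_V m) ^ 2 * (card (g ` path_V m) - 1)"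
  using nbr_locating_card_bound[OF _ assms(2)] path_degree[OF assms(1)] by (simp add: path_V_def)

section \<open>Locating words\<close>

fun triples :: "'a list \<Rightarrow> ('a \<times> 'a \<times> 'a) list" where
  "triples (a # b # c # r) = (a, b, c) # triples (b # c # r)"
| "triples _ = []"

text \<open>Padding a word by mirror images of its second and penultimate letters makes the triple
  centred at each letter record exactly the colours of its neighbours on the path.\<close>

definition mirror_ends :: "'a list \<Rightarrow> 'a list" where
  "mirror_ends xs = xs ! 1 # xs @ [xs ! (length xs - 2)]"

definition centre_nbrs :: "'a \<times> 'a \<times> 'a \<Rightarrow> 'a \<times> 'a set" where
  "centre_nbrs t = (case t of (a, b, c) \<Rightarrow> (b, {a, c}))"

definition locating_word :: "nat list \<Rightarrow> bool" where
  "locating_word xs \<longleftrightarrow> 2 \<le> length xs \<and> successively (\<noteq>) xs \<and>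
     distinct (map centre_nbrs (triples (mirror_ends xs)))"

lemma centre_nbrs_simp [simp]: "centre_nbrs (a, b, c) = (b, {a, c})"
  by (simp add: centre_nbrs_def)

lemma triples_Cons_Cons:
  "triples (a # b # xs) = (if xs = [] then [] else (a, b, hd xs) # triples (b # xs))"
  by (cases xs) auto

lemma set_triplesD:
  "t \<in> set (triples xs) \<Longrightarrow> fst t \<in> set xs \<and> fst (snd t) \<in> set xs \<and> snd (snd t) \<in> set xs"
  by (induction xs rule: triples.induct) auto

lemma length_triples: "length (triples xs) = length xs - 2"
  by (induction xs rule: triples.induct) auto

lemma nth_triples: "i + 2 < length xs \<Longrightarrow> triples xs ! i = (xs ! i, xs ! (i + 1), xs ! (i + 2))"
proof (induction xs arbitrary: i rule: triples.induct)
  case (1 a b c r)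
  then show ?case by (cases i) auto
qed auto

lemma triples_map: "triples (map f xs) = map (\<lambda>(a, b, c). (f a, f b, f c)) (triples xs)"
  by (induction xs rule: triples.induct) auto

lemma set_mirror_ends: "2 \<le> length xs \<Longrightarrow> set (mirror_ends xs) = set xs"
  by (auto simp: mirror_ends_def)

lemma nth_mirror_ends:
  assumes "2 \<le> length xs" "k \<le> length xs + 1"
  shows "mirror_ends xs ! k =
    (if k = 0 then xs ! 1 else if k \<le> length xs then xs ! (k - 1) else xs ! (length xs - 2))"
  using assms by (cases k) (auto simp: mirror_ends_def nth_append)

lemma mirror_ends_nbrs:
  assumes "2 \<le> length xs" "i < length xs"
  shows "{mirror_ends xs ! i, mirror_ends xs ! (i + 2)} = (!) xs ` neighbours (path_V (length xs)) path_E i"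
proof -
  let ?m = "length xs"
  have l: "mirror_ends xs ! i = (if i = 0 then xs ! 1 else xs ! (i - 1))"
    using assms nth_mirror_ends[of xs i] by auto
  have r: "mirror_ends xs ! (i + 2) = (if i + 1 < ?m then xs ! (i + 1) else xs ! (?m - 2))"
    using assms nth_mirror_ends[of xs "i + 2"] by auto
  consider "i = 0" | "0 < i" "i + 1 < ?m" | "0 < i" "i + 1 = ?m" using assms by linarith
  then show ?thesis
  proof cases
    case 1
    then have "neighbours (path_V ?m) path_E i = {1}" using assms by (auto simp: neighbours_path)
    then show ?thesis using 1 l r assms by auto
  next
    case 2
    then have "neighbours (path_V ?m) path_E i = {i - 1, i + 1}" by (auto simp: neighbours_path)
    then show ?thesis using 2 l r by auto
  next
    case 3
    then have "neighbours (path_V ?m) path_E i = {i - 1}" by (auto simp: neighbours_path)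
    moreover have "?m - 2 = i - 1" using 3 by simp
    ultimately show ?thesis using 3 l r by auto
  qed
qed

lemma nbr_locating_nth:
  assumes "locating_word xs"
  shows "nbr_locating (path_V (length xs)) path_E (nth xs)"
proof -
  let ?L = "mirror_ends xs" and ?V = "path_V (length xs)"
  have l2: "2 \<le> length xs" and succ: "successively (\<noteq>) xs"
    and d: "distinct (map centre_nbrs (triples ?L))"
    using assms by (auto simp: locating_word_def)
  have len: "length (triples ?L) = length xs"
    by (simp add: length_triples mirror_ends_def)
  have entry: "map centre_nbrs (triples ?L) ! i = (xs ! i, (!) xs ` neighbours ?V path_E i)"
    if "i < length xs" for i
  proof -
    have "triples ?L ! i = (?L ! i, ?L ! (i + 1), ?L ! (i + 2))"
      using that by (intro nth_triples) (simp add: mirror_ends_def)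
    moreover have "?L ! (i + 1) = xs ! i" using that l2 nth_mirror_ends[of xs "i + 1"] by simp
    ultimately show ?thesis using that len mirror_ends_nbrs[OF l2 that] by simp
  qed
  have "inj_on (\<lambda>i. (xs ! i, (!) xs ` neighbours ?V path_E i)) ?V"
  proof (rule inj_onI)
    fix i j assume "i \<in> ?V" "j \<in> ?V"
      and "(xs ! i, (!) xs ` neighbours ?V path_E i) = (xs ! j, (!) xs ` neighbours ?V path_E j)"
    then show "i = j" using nth_eq_iff_index_eq[OF d] entry len by (auto simp: path_V_def)
  qed
  moreover have "xs ! i \<noteq> xs ! j" if "i \<in> ?V" "j \<in> ?V" "path_E i j" for i j
    using that successively_nth[OF succ, of i] successively_nth[OF succ, of j]
    by (auto simp: path_V_def path_E_def)
  ultimately show ?thesis by (simp add: nbr_locating_def)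
qed

lemma image_nth_path_V: "nth xs ` path_V (length xs) = set xs"
  by (auto simp: path_V_def set_conv_nth)

section \<open>Weaving a new letter into a list of pairs\<close>

fun weave :: "nat \<Rightarrow> (nat \<times> nat) list \<Rightarrow> nat list" where
  "weave z [] = []"
| "weave z ((a, b) # ps) = (if a = b then [a] else [a, b]) @ z # weave z ps"

text \<open>In the word \<open>weave z ps @ f # _\<close> each \<open>z\<close> sits between the second letter of a pair
  and the first letter of the next pair (or \<open>f\<close>); these bridges determine the triples centred
  at the letters \<open>z\<close>.\<close>

fun bridges :: "(nat \<times> nat) list \<Rightarrow> nat \<Rightarrow> (nat \<times> nat) list" where
  "bridges [] f = []"
| "bridges [(a, b)] f = [(b, f)]"
| "bridges ((a, b) # (c, d) # ps) f = (b, c) # bridges ((c, d) # ps) f"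

fun weave_triples :: "nat \<Rightarrow> nat \<Rightarrow> (nat \<times> nat) list \<Rightarrow> nat \<Rightarrow> (nat \<times> nat \<times> nat) list" where
  "weave_triples z u [] f = []"
| "weave_triples z u ((a, b) # ps) f =
     (if a = b then [(u, a, z)] else [(u, a, b), (a, b, z)])
     @ [(b, z, case ps of [] \<Rightarrow> f | p # _ \<Rightarrow> fst p)] @ weave_triples z z ps f"

definition pair_entries :: "nat \<Rightarrow> nat \<times> nat \<Rightarrow> (nat \<times> nat set) set" where
  "pair_entries z p = (case p of (a, b) \<Rightarrow> if a = b then {(a, {z})} else {(a, {z, b}), (b, {a, z})})"

lemma bridges_Cons:
  "bridges ((a, b) # ps) f = (b, case ps of [] \<Rightarrow> f | p # _ \<Rightarrow> fst p) # bridges ps f"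
  by (cases ps) auto

lemma bridges_append: "qs \<noteq> [] \<Longrightarrow> bridges (ps @ qs) f = bridges ps (fst (hd qs)) @ bridges qs f"
proof (induction ps)
  case (Cons p ps)
  then show ?case by (cases p; cases ps) (auto simp: bridges_Cons split: list.splits)
qed simp

lemma weave_append: "weave z (ps @ qs) = weave z ps @ weave z qs"
  by (induction ps) auto

lemma hd_weave: "weave z (p # ps) \<noteq> [] \<and> hd (weave z (p # ps)) = fst p"
  by (cases p) auto

lemma triples_weave:
  "Q \<noteq> [] \<Longrightarrow>
   triples (u # weave z ps @ Q) = weave_triples z u ps (hd Q) @ triples ((if ps = [] then u else z) # Q)"
proof (induction ps arbitrary: u)
  case (Cons p ps)
  have "hd (weave z ps @ Q) = (case ps of [] \<Rightarrow> hd Q | q # _ \<Rightarrow> fst q)"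
    using hd_weave by (cases ps) auto
  then show ?case
    using Cons.IH[OF Cons.prems, of z] Cons.prems
    by (cases p) (auto simp: triples_Cons_Cons split: list.splits)
qed simp

lemma set_weave_triples:
  "set (map centre_nbrs (weave_triples z z ps f))
     = (\<Union>p\<in>set ps. pair_entries z p) \<union> (\<lambda>p. (z, {fst p, snd p})) ` set (bridges ps f)"
proof (induction ps)
  case (Cons p ps)
  then show ?case by (cases p) (auto simp: bridges_Cons pair_entries_def)
qed simp

lemma pair_entries_centre:
  "x \<in> pair_entries z p \<Longrightarrow> fst p \<noteq> z \<Longrightarrow> snd p \<noteq> z \<Longrightarrow> fst x \<noteq> z"
  by (cases x; cases p) (auto simp: pair_entries_def split: if_splits)

lemma pair_entries_determine_pair:
  "x \<in> pair_entries z p \<Longrightarrow> fst p \<noteq> z \<Longrightarrow> snd p \<noteq> z \<Longrightarrow>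
   insert (fst x) (snd x - {z}) = {fst p, snd p}"
  by (cases p) (auto simp: pair_entries_def split: if_splits)

lemma distinct_weave_triples:
  assumes "\<forall>p\<in>set ps. fst p \<noteq> z \<and> snd p \<noteq> z"
    and "distinct (map (\<lambda>p. {fst p, snd p}) ps)"
    and "distinct (map (\<lambda>p. {fst p, snd p}) (bridges ps f))"
  shows "distinct (map centre_nbrs (weave_triples z z ps f))"
  using assms
proof (induction ps)
  case (Cons p ps)
  obtain a b where p: "p = (a, b)" by force
  let ?next = "case ps of [] \<Rightarrow> f | q # _ \<Rightarrow> fst q"
  let ?S = "set (map centre_nbrs (weave_triples z z ps f))"
  have IH: "distinct (map centre_nbrs (weave_triples z z ps f))"
    using Cons by (auto simp: p bridges_Cons)
  have ab: "a \<noteq> z" "b \<noteq> z" using Cons.prems(1) p by auto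
  have new_pair: "x \<notin> ?S" if "x \<in> pair_entries z (a, b)" for x
  proof
    assume "x \<in> ?S"
    moreover have "fst x \<noteq> z" using pair_entries_centre[OF that] ab by simp
    ultimately obtain q where q: "q \<in> set ps" "x \<in> pair_entries z q"
      unfolding set_weave_triples by force
    then have "{a, b} = {fst q, snd q}"
      using pair_entries_determine_pair[OF that] pair_entries_determine_pair[OF q(2)]
        ab Cons.prems(1) by auto
    then show False using Cons.prems(2) q(1) p by auto
  qed
  have new_bridge: "(z, {b, ?next}) \<notin> ?S"
  proof
    assume "(z, {b, ?next}) \<in> ?S"
    moreover have "(z, {b, ?next}) \<notin> pair_entries z q" if "q \<in> set ps" for q
      using pair_entries_centre[of "(z, {b, ?next})" z q] Cons.prems(1) that by auto
    ultimately have "(z, {b, ?next}) \<in> (\<lambda>p. (z, {fst p, snd p})) ` set (bridges ps f)"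
      unfolding set_weave_triples by blast
    then show False using Cons.prems(3) p by (auto simp: bridges_Cons)
  qed
  show ?case
  proof (cases "a = b")
    case True
    have "(a, {z}) \<in> pair_entries z (a, b)" using True by (simp add: pair_entries_def)
    then show ?thesis using True IH new_pair new_bridge ab by (simp add: p)
  next
    case False
    have "(a, {z, b}) \<in> pair_entries z (a, b)" "(b, {a, z}) \<in> pair_entries z (a, b)"
      using False by (auto simp: pair_entries_def)
    then show ?thesis using False IH new_pair new_bridge ab by (simp add: p)
  qed
qed simp

lemma weave_triples_centred_at_z:
  assumes "\<forall>p\<in>set ps. fst p \<noteq> z \<and> snd p \<noteq> z" "y \<in> set (map centre_nbrs (weave_triples z z ps f))"
  shows "fst y = z \<or> z \<in> snd y"
  using assms unfolding set_weave_triples by (auto simp: pair_entries_def split: if_splits)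

lemma set_weave: "\<forall>p\<in>set ps. fst p \<in> A \<and> snd p \<in> A \<Longrightarrow> set (weave z ps) \<subseteq> insert z A"
proof (induction ps)
  case (Cons p ps)
  then show ?case by (cases p) auto
qed simp

lemma weave_successively:
  assumes "\<forall>p\<in>set ps. fst p \<noteq> z \<and> snd p \<noteq> z"
  shows "successively (\<noteq>) (weave z ps) \<and> (ps \<noteq> [] \<longrightarrow> last (weave z ps) = z)"
  using assms
proof (induction ps)
  case (Cons p ps)
  obtain a b where p: "p = (a, b)" by force
  have IH: "successively (\<noteq>) (weave z ps) \<and> (ps \<noteq> [] \<longrightarrow> last (weave z ps) = z)"
    using Cons by auto
  have "weave z ps = [] \<or> hd (weave z ps) \<noteq> z"
    using Cons.prems hd_weave by (cases ps) auto
  then have "successively (\<noteq>) (z # weave z ps)" using IH by (auto simp: successively_Cons)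
  moreover have "last (weave z (p # ps)) = z" using IH by (cases "weave z ps = []") (auto simp: p)
  ultimately show ?case using Cons.prems by (auto simp: p successively_append_iff successively_Cons)
qed simp

section \<open>A tour through all pairs of letters\<close>

text \<open>\<open>tour i\<close> lists every unordered pair of letters from \<open>{1..i+2}\<close>, repetitions allowed,
  exactly once, and so do its bridges (closing with \<open>f = 1\<close>).\<close>

definition fresh_pairs :: "nat \<Rightarrow> (nat \<times> nat) list" where
  "fresh_pairs w = [(1, w), (w, w)] @ map (\<lambda>b. (b, w)) [2..<w]"

primrec tour_body :: "nat \<Rightarrow> (nat \<times> nat) list" where
  "tour_body 0 = [(1, 2), (2, 2)]"
| "tour_body (Suc i) = tour_body i @ fresh_pairs (i + 3)"

definition tour :: "nat \<Rightarrow> (nat \<times> nat) list" where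
  "tour i = tour_body i @ [(1, 1)]"

definition sort_pair :: "nat \<times> nat \<Rightarrow> nat \<times> nat" where
  "sort_pair p = (min (fst p) (snd p), max (fst p) (snd p))"

lemma distinct_sort_pair_iff: "distinct (map sort_pair ps) \<longleftrightarrow> distinct (map (\<lambda>p. {fst p, snd p}) ps)"
proof -
  have "sort_pair p = sort_pair q \<longleftrightarrow> {fst p, snd p} = {fst q, snd q}" for p q
    by (auto simp: sort_pair_def doubleton_eq_iff min_def max_def)
  then show ?thesis unfolding distinct_map inj_on_def by simp
qed

lemma tour_body_Cons: "\<exists>ps. tour_body i = (1, 2) # ps"
  by (induction i) auto

lemma tour_Cons: "\<exists>ps. tour i = (1, 2) # ps"
  using tour_body_Cons[of i] by (auto simp: tour_def)

lemma tour_body_letters: "p \<in> set (tour_body i) \<Longrightarrow> fst p \<in> {1..i+2} \<and> snd p \<in> {1..i+2}"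
  by (induction i) (auto simp: fresh_pairs_def)

lemma tour_letters: "p \<in> set (tour i) \<Longrightarrow> fst p \<in> {1..i+2} \<and> snd p \<in> {1..i+2}"
  using tour_body_letters[of p i] by (auto simp: tour_def)

lemma distinct_sort_pair_append:
  assumes "distinct (map sort_pair ps)" "distinct (map sort_pair qs)"
    and "\<And>p. p \<in> set ps \<Longrightarrow> snd (sort_pair p) < w" "\<And>q. q \<in> set qs \<Longrightarrow> snd (sort_pair q) = w"
  shows "distinct (map sort_pair (ps @ qs))"
proof -
  have "sort_pair p \<noteq> sort_pair q" if "p \<in> set ps" "q \<in> set qs" for p q
    using assms(3)[OF that(1)] assms(4)[OF that(2)] by auto
  then have "sort_pair ` set ps \<inter> sort_pair ` set qs = {}" by blast
  then show ?thesis using assms(1,2) by simp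
qed

lemma distinct_sort_pair_tour_body:
  "distinct (map sort_pair (tour_body i)) \<and> (\<forall>p\<in>set (tour_body i). snd (sort_pair p) \<in> {2..i+2})"
proof (induction i)
  case (Suc i)
  let ?w = "i + 3"
  have top: "snd (sort_pair p) = ?w" if "p \<in> set (fresh_pairs ?w)" for p
    using that by (auto simp: fresh_pairs_def sort_pair_def)
  have "map sort_pair (fresh_pairs ?w) = (1, ?w) # (?w, ?w) # map (\<lambda>b. (b, ?w)) [2..<?w]"
    by (simp add: fresh_pairs_def sort_pair_def)
  then have "distinct (map sort_pair (fresh_pairs ?w))"
    by (auto simp: distinct_map inj_on_def)
  then have "distinct (map sort_pair (tour_body i @ fresh_pairs ?w))"
    using Suc.IH top by (intro distinct_sort_pair_append) auto
  then show ?case using Suc.IH top by auto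
qed (auto simp: sort_pair_def)

lemma distinct_sort_pair_tour: "distinct (map sort_pair (tour i))"
  using distinct_sort_pair_tour_body[of i] by (auto simp: tour_def sort_pair_def image_iff)

lemma bridges_map_Cons:
  "(w, case map (\<lambda>b. (b, w)) bs of [] \<Rightarrow> f | p # _ \<Rightarrow> fst p) # bridges (map (\<lambda>b. (b, w)) bs) f
   = map (\<lambda>c. (w, c)) (bs @ [f])"
proof (induction bs)
  case (Cons b bs)
  then show ?case by (cases bs) auto
qed simp

lemma bridges_fresh_pairs:
  assumes "w \<ge> 3"
  shows "bridges (fresh_pairs w) f = (w, w) # map (\<lambda>c. (w, c)) ([2..<w] @ [f])"
proof -
  have "[2..<w] = 2 # [3..<w]" using assms upt_rec by simp
  then show ?thesis unfolding fresh_pairs_def by (simp add: bridges_Cons bridges_map_Cons del: upt_Suc)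
qed

lemma distinct_sort_pair_bridges_tour_body:
  "distinct (map sort_pair (bridges (tour_body i) 1))
   \<and> (\<forall>p\<in>set (bridges (tour_body i) 1). snd (sort_pair p) \<in> {2..i+2})"
proof (induction i)
  case (Suc i)
  let ?w = "i + 3"
  let ?N = "(?w, ?w) # map (\<lambda>c. (?w, c)) ([2..<?w] @ [1])"
  have "bridges (tour_body (Suc i)) 1 = bridges (tour_body i) 1 @ bridges (fresh_pairs ?w) 1"
    by (simp add: bridges_append fresh_pairs_def)
  then have split: "bridges (tour_body (Suc i)) 1 = bridges (tour_body i) 1 @ ?N"
    by (simp add: bridges_fresh_pairs)
  have top: "snd (sort_pair p) = ?w" if "p \<in> set ?N" for p
    using that by (auto simp: sort_pair_def)
  have "map sort_pair ?N = (?w, ?w) # map (\<lambda>c. (c, ?w)) ([2..<?w] @ [1])"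
    by (simp add: sort_pair_def)
  then have "distinct (map sort_pair ?N)"
    by (auto simp: distinct_map inj_on_def)
  then have "distinct (map sort_pair (bridges (tour_body i) 1 @ ?N))"
    using Suc.IH top by (intro distinct_sort_pair_append) auto
  then show ?case unfolding split using Suc.IH top by auto
qed (auto simp: sort_pair_def)

lemma distinct_sort_pair_bridges_tour: "distinct (map sort_pair (bridges (tour i) 1))"
proof -
  have "bridges (tour i) 1 = bridges (tour_body i) 1 @ [(1, 1)]"
    using tour_body_Cons[of i] by (auto simp: tour_def bridges_append)
  then show ?thesis
    using distinct_sort_pair_bridges_tour_body[of i] by (auto simp: sort_pair_def image_iff)
qed

lemma length_weave_tour: "2 * length (weave z (tour i)) = 3 * (i + 2)^2 + (i + 2)"
proof (induction i)
  case (Suc i)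
  have "length (weave z (map (\<lambda>b. (b, w)) bs)) = 3 * length bs" if "w \<notin> set bs" for w bs
    using that by (induction bs) auto
  then have "length (weave z (fresh_pairs (i + 3))) = 5 + 3 * (i + 1)"
    by (simp add: fresh_pairs_def)
  then have "length (weave z (tour (Suc i))) = length (weave z (tour i)) + 5 + 3 * (i + 1)"
    by (simp add: tour_def weave_append)
  with Suc show ?case by (simp add: power2_eq_square algebra_simps)
qed (simp add: tour_def power2_eq_square)

lemma set_weave_tour: "set (weave (i + 3) (tour i)) \<subseteq> {1..i+3}"
proof -
  have "set (weave (i + 3) (tour i)) \<subseteq> insert (i + 3) {1..i+2}"
    using tour_letters by (intro set_weave) auto
  then show ?thesis by auto
qed

lemma distinct_Cons_append_Cons:
  "distinct (b # X) \<Longrightarrow> distinct (a # W) \<Longrightarrow> \<forall>x\<in>set (b # X). P x \<Longrightarrow> \<forall>x\<in>set (a # W). \<not> P x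
   \<Longrightarrow> distinct (a # X @ b # W)"
  by auto

lemma tour_avoids_fresh: "\<forall>p\<in>set (tour i). fst p \<noteq> i + 3 \<and> snd p \<noteq> i + 3"
  using tour_letters by fastforce

lemma weave_tour: "weave z (tour i) = 1 # 2 # z # weave z (tl (tour i))"
  using tour_Cons[of i] by auto

lemma weave_triples_tour: "weave_triples z u (tour i) f = (u, 1, 2) # tl (weave_triples z z (tour i) f)"
  using tour_Cons[of i] by (auto split: list.splits)

text \<open>Every triple inside the woven tour has the new letter \<open>z\<close> as its centre or as a neighbour,
  which keeps it apart from the triples of any word over the old letters.\<close>

lemma weave_tour_triples:
  fixes i :: nat
  defines "z \<equiv> i + 3" and "X \<equiv> tl (weave_triples (i + 3) (i + 3) (tour i) 1)"
  shows "Q \<noteq> [] \<Longrightarrow> hd Q = 1 \<Longrightarrow> triples (2 # weave z (tour i) @ Q) = (2, 1, 2) # X @ triples (z # Q)"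
    and "distinct (map centre_nbrs ((z, 1, 2) # X))"
    and "\<forall>y\<in>set (map centre_nbrs ((z, 1, 2) # X)). fst y = z \<or> z \<in> snd y"
proof -
  note start = weave_triples_tour[of z _ i]
  have "tour i \<noteq> []" using tour_Cons[of i] by auto
  then show "triples (2 # weave z (tour i) @ Q) = (2, 1, 2) # X @ triples (z # Q)"
    if "Q \<noteq> []" "hd Q = 1"
    using triples_weave[OF that(1), of 2 z "tour i"] that start[of 2 1] by (simp add: X_def z_def)
  have "distinct (map sort_pair (tour i))" "distinct (map sort_pair (bridges (tour i) 1))"
    by (rule distinct_sort_pair_tour distinct_sort_pair_bridges_tour)+
  then show "distinct (map centre_nbrs ((z, 1, 2) # X))"
    using distinct_weave_triples[OF tour_avoids_fresh] start[of z 1]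
    by (simp add: distinct_sort_pair_iff X_def z_def)
  show "\<forall>y\<in>set (map centre_nbrs ((z, 1, 2) # X)). fst y = z \<or> z \<in> snd y"
    using weave_triples_centred_at_z[OF tour_avoids_fresh] start[of z 1]
    by (metis X_def z_def)
qed

lemma weave_tour_successively:
  "successively (\<noteq>) (weave (i + 3) (tour i)) \<and> last (weave (i + 3) (tour i)) = i + 3"
  using weave_successively[OF tour_avoids_fresh] by (simp add: tour_def)

lemma locating_word_weave_append:
  assumes R: "locating_word R" "set R \<subseteq> {1..i+2}" "take 2 R = [1, 2]"
  shows "locating_word (weave (i + 3) (tour i) @ R)"
proof -
  define z where "z = i + 3"
  define T where "T = weave z (tour i)"
  define X where "X = tl (weave_triples z z (tour i) 1)"
  define e where "e = R ! (length R - 2)"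
  have lR: "2 \<le> length R" using R(1) by (simp add: locating_word_def)
  obtain R' where R_eq: "R = 1 # 2 # R'"
    using R(3) lR by (metis append_Cons append_Nil append_take_drop_id)
  have T_eq: "T = 1 # 2 # z # weave z (tl (tour i))"
    unfolding T_def by (rule weave_tour)
  have "(T @ R) ! (length (T @ R) - 2) = e"
    using lR nth_append_length_plus[of T R "length R - 2"] by (simp add: e_def)
  then have mirror: "mirror_ends (T @ R) = 2 # T @ R @ [e]"
    by (simp add: mirror_ends_def T_eq)
  define W where "W = triples (1 # 2 # R' @ [e])"
  have old: "triples (mirror_ends R) = (2, 1, 2) # W"
    by (simp add: mirror_ends_def R_eq e_def W_def)
  have new: "triples (mirror_ends (T @ R)) = (2, 1, 2) # X @ (z, 1, 2) # W"
    using weave_tour_triples(1)[of "R @ [e]" i] unfolding mirror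
    by (simp add: R_eq W_def T_def X_def z_def)
  have dW: "distinct (map centre_nbrs ((2, 1, 2) # W))"
    using R(1) old by (simp add: locating_word_def)
  have dX: "distinct (map centre_nbrs ((z, 1, 2) # X))"
    and zX: "\<forall>y\<in>set (map centre_nbrs ((z, 1, 2) # X)). fst y = z \<or> z \<in> snd y"
    using weave_tour_triples(2,3)[of i] by (simp_all add: X_def z_def)
  have "\<not> (fst y = z \<or> z \<in> snd y)" if "y \<in> set (map centre_nbrs ((2, 1, 2) # W))" for y
  proof -
    from that old have "y \<in> centre_nbrs ` set (triples (mirror_ends R))" by simp
    then obtain t where t: "t \<in> set (triples (mirror_ends R))" "y = centre_nbrs t" by (rule imageE)
    have "set (mirror_ends R) \<subseteq> {1..i+2}" using set_mirror_ends[OF lR] R(2) by simp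
    then have "fst t \<in> {1..i+2}" "fst (snd t) \<in> {1..i+2}" "snd (snd t) \<in> {1..i+2}"
      using set_triplesD[OF t(1)] by auto
    then show ?thesis using t(2) by (cases t) (auto simp: z_def)
  qed
  then have "distinct (map centre_nbrs ((2, 1, 2) # X @ (z, 1, 2) # W))"
    using distinct_Cons_append_Cons[of "centre_nbrs (z, 1, 2)" "map centre_nbrs X"
        "centre_nbrs (2, 1, 2)" "map centre_nbrs W" "\<lambda>y. fst y = z \<or> z \<in> snd y"] dW dX zX
    by (simp only: list.map map_append) blast
  moreover have "successively (\<noteq>) (T @ R)"
    using weave_tour_successively[of i] R(1) lR
    by (auto simp: successively_append_iff T_def z_def R_eq locating_word_def)
  ultimately show ?thesis using lR new by (simp add: locating_word_def T_def z_def)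
qed

lemma locating_word_Cons_weave: "locating_word (2 # weave (i + 3) (tour i))"
proof -
  define z where "z = i + 3"
  define T where "T = weave z (tour i)"
  define X where "X = tl (weave_triples z z (tour i) 1)"
  have T_eq: "T = 1 # 2 # z # weave z (tl (tour i))"
    unfolding T_def by (rule weave_tour)
  have "T = weave z (tour_body i) @ [1, z]"
    by (simp add: T_def tour_def weave_append)
  then have "(2 # T) ! (length (2 # T) - 2) = 1"
    by (simp add: nth_append)
  then have mirror: "mirror_ends (2 # T) = 1 # 2 # (T @ [1])"
    by (simp add: mirror_ends_def T_eq)
  have "triples (2 # T @ [1]) = (2, 1, 2) # X"
    using weave_tour_triples(1)[of "[1]" i] by (simp add: T_def X_def z_def)
  then have triples: "triples (mirror_ends (2 # T)) = (1, 2, 1) # (2, 1, 2) # X"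
    unfolding mirror triples_Cons_Cons by (simp add: T_eq)
  have dX: "distinct (map centre_nbrs X)"
    and zX: "\<forall>y\<in>set (map centre_nbrs X). fst y = z \<or> z \<in> snd y"
    using weave_tour_triples(2,3)[of i] by (simp_all add: X_def z_def)
  have "(2, {1}) \<notin> set (map centre_nbrs X)" "(1, {2}) \<notin> set (map centre_nbrs X)"
    using zX by (auto simp: z_def)
  then have "distinct (map centre_nbrs (triples (mirror_ends (2 # T))))"
    using dX unfolding triples by simp
  moreover have "successively (\<noteq>) (2 # T)"
    using weave_tour_successively[of i] by (simp add: T_eq flip: T_def z_def)
  moreover have "2 \<le> length (2 # T)" by (simp add: T_eq)
  ultimately show ?thesis by (simp add: locating_word_def T_def z_def)
qed

section \<open>Locating words of every admissible length\<close>

lemma locating_word_map: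
  assumes w: "locating_word R" and inj: "inj_on \<pi> (set R)"
  shows "locating_word (map \<pi> R)"
proof -
  have lR: "2 \<le> length R" using w by (simp add: locating_word_def)
  have "successively (\<noteq>) (map \<pi> R)"
    unfolding successively_map
    by (rule successively_mono[of "(\<noteq>)"]) (use w inj in \<open>auto simp: locating_word_def inj_on_def\<close>)
  let ?g = "\<lambda>(a, b, c). (\<pi> a, \<pi> b, \<pi> c)"
  let ?W = "triples (mirror_ends R)"
  have d: "distinct (map centre_nbrs ?W)" using w by (simp add: locating_word_def)
  have letters: "{a, b, c} \<subseteq> set R" if "(a, b, c) \<in> set ?W" for a b c
    using set_triplesD[OF that] set_mirror_ends[OF lR] by auto
  have "inj_on (centre_nbrs \<circ> ?g) (set ?W)"
  proof (rule inj_onI)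
    fix t t' assume t: "t \<in> set ?W" "t' \<in> set ?W" and eq: "(centre_nbrs \<circ> ?g) t = (centre_nbrs \<circ> ?g) t'"
    obtain a b c a' b' c' where abc: "t = (a, b, c)" "t' = (a', b', c')" by (cases t; cases t')
    have "b = b'" using eq inj letters t unfolding abc by (auto simp: inj_on_def)
    moreover have "{a, c} = {a', c'}"
      using eq inj_on_image_eq_iff[OF inj, of "{a, c}" "{a', c'}"] letters t unfolding abc by auto
    ultimately have "centre_nbrs t = centre_nbrs t'" by (simp add: abc)
    moreover have "inj_on centre_nbrs (set ?W)" using d by (simp add: distinct_map)
    ultimately show "t = t'" using t by (blast dest: inj_onD)
  qed
  then have "distinct (map (centre_nbrs \<circ> ?g) ?W)" using d by (simp add: distinct_map)
  moreover have "mirror_ends (map \<pi> R) = map \<pi> (mirror_ends R)"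
    using lR by (simp add: mirror_ends_def)
  ultimately have "distinct (map centre_nbrs (triples (mirror_ends (map \<pi> R))))"
    by (simp add: triples_map)
  with \<open>successively (\<noteq>) (map \<pi> R)\<close> show ?thesis using lR by (simp add: locating_word_def)
qed

lemma locating_word_normalise:
  assumes w: "locating_word R" and S: "set R \<subseteq> {1..j}"
  obtains R' where "locating_word R'" "length R' = length R" "set R' \<subseteq> {1..j}" "take 2 R' = [1, 2]"
proof -
  obtain p q R'' where R: "R = p # q # R''"
    using w by (cases R rule: remdups_adj.cases) (auto simp: locating_word_def)
  have pq: "p \<noteq> q" and range: "p \<in> {1..j}" "Transposition.transpose p 1 q \<in> {1..j}" "2 \<le> j"
    using w S by (auto simp: R locating_word_def Transposition.transpose_def)
  define \<pi> where "\<pi> = Transposition.transpose (Transposition.transpose p 1 q) 2 \<circ> Transposition.transpose p 1"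
  have "\<pi> x \<in> {1..j}" if "x \<in> {1..j}" for x
    using that range by (auto simp: \<pi>_def Transposition.transpose_def)
  then have "set (map \<pi> R) \<subseteq> {1..j}" using S by auto
  moreover have "locating_word (map \<pi> R)"
    by (rule locating_word_map[OF w], rule inj_on_subset[of _ UNIV])
      (auto simp: \<pi>_def intro: inj_compose inj_transpose)
  moreover have "take 2 (map \<pi> R) = [1, 2]"
    using pq by (auto simp: R \<pi>_def Transposition.transpose_def)
  ultimately show ?thesis using that[of "map \<pi> R"] by simp
qed

definition locating_words_exist :: "nat \<Rightarrow> bool" where
  "locating_words_exist k \<longleftrightarrow> (\<forall>m. 2 \<le> m \<longrightarrow> 2 * m \<le> k^2 * (k - 1) \<longrightarrow>
     (\<exists>xs. locating_word xs \<and> length xs = m \<and> set xs \<subseteq> {1..k}))"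

text \<open>Going from \<open>i + 2\<close> to \<open>i + 3\<close> letters, a word of new length \<open>m\<close> is the woven tour
  (of length \<open>t\<close>) followed by a normalised old word of length \<open>m - t\<close>, or \<open>2 # weave\<close> when
  \<open>m = t + 1\<close>. The lengths \<open>m \<le> t\<close> beyond the old range, which exist only for \<open>i \<le> 2\<close>,
  must be supplied separately.\<close>

lemma locating_words_exist_step:
  assumes IH: "locating_words_exist (i + 2)"
    and short: "\<And>m. (i + 2)^2 * (i + 1) < 2 * m \<Longrightarrow> 2 * m \<le> 3 * (i + 2)^2 + (i + 2) \<Longrightarrow>
      \<exists>xs. locating_word xs \<and> length xs = m \<and> set xs \<subseteq> {1..i+3}"
  shows "locating_words_exist (i + 3)"
  unfolding locating_words_exist_def
proof (intro allI impI)
  fix m :: nat assume m2: "2 \<le> m" and mb: "2 * m \<le> (i + 3)^2 * (i + 3 - 1)"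
  define T where "T = weave (i + 3) (tour i)"
  have t: "2 * length T = 3 * (i + 2)^2 + (i + 2)"
    by (simp add: T_def length_weave_tour)
  have T_set: "set T \<subseteq> {1..i+3}"
    unfolding T_def by (rule set_weave_tour)
  have total: "(i + 2)^2 * (i + 1) + (3 * (i + 2)^2 + (i + 2)) = (i + 3)^2 * (i + 2)"
    by (simp add: power2_eq_square algebra_simps)
  consider (old) "2 * m \<le> (i + 2)^2 * (i + 1)"
    | (within) "(i + 2)^2 * (i + 1) < 2 * m" "m \<le> length T"
    | (one_more) "m = length T + 1"
    | (long) "length T + 2 \<le> m"
    by linarith
  then show "\<exists>xs. locating_word xs \<and> length xs = m \<and> set xs \<subseteq> {1..i+3}"
  proof cases
    case old
    then obtain xs where "locating_word xs" "length xs = m" "set xs \<subseteq> {1..i+2}"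
      using IH m2 by (auto simp: locating_words_exist_def)
    then show ?thesis by (intro exI[of _ xs]) auto
  next
    case within
    then show ?thesis using t by (intro short) auto
  next
    case one_more
    have "locating_word (2 # T)" unfolding T_def by (rule locating_word_Cons_weave)
    then show ?thesis using one_more T_set by (intro exI[of _ "2 # T"]) auto
  next
    case long
    have "2 \<le> m - length T" "2 * (m - length T) \<le> (i + 2)^2 * (i + 2 - 1)"
      using mb t total long by simp_all
    then obtain R where "locating_word R" "length R = m - length T" "set R \<subseteq> {1..i+2}"
      using IH unfolding locating_words_exist_def by blast
    then obtain R' where R': "locating_word R'" "length R' = m - length T" "set R' \<subseteq> {1..i+2}"
      "take 2 R' = [1, 2]"
      by (metis locating_word_normalise)
    have "locating_word (T @ R')"
      unfolding T_def using R'(1,3,4) by (rule locating_word_weave_append)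
    then show ?thesis using R' long T_set by (intro exI[of _ "T @ R'"]) auto
  qed
qed

lemma short_locating_words:
  "\<forall>m\<in>{3..7}. \<exists>xs\<in>set [[1, 2, 3], [1, 2, 1, 3], [1, 3, 2, 1, 3], [1, 3, 2, 3, 2, 1],
      [1, 2, 3, 1, 3, 1, 2]].
     length xs = m \<and> locating_word xs \<and> set xs \<subseteq> {1..3}"
  "\<forall>m\<in>{10..15}. \<exists>xs\<in>set [[1, 2, 1, 3, 1, 4, 3, 2, 4, 3], [1, 2, 4, 3, 4, 1, 4, 1, 2, 3, 2],
      [1, 4, 1, 2, 3, 4, 3, 1, 2, 1, 2, 4], [1, 2, 1, 3, 2, 1, 4, 1, 4, 3, 2, 4, 3],
      [1, 3, 2, 4, 1, 4, 3, 2, 1, 4, 1, 3, 4, 2], [1, 4, 1, 3, 2, 3, 4, 2, 4, 2, 1, 4, 3, 1, 2]].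
     length xs = m \<and> locating_word xs \<and> set xs \<subseteq> {1..4}"
  "\<forall>m\<in>{25..26}. \<exists>xs\<in>set
      [[1, 4, 3, 5, 4, 5, 2, 1, 3, 5, 1, 2, 1, 4, 5, 1, 4, 1, 3, 2, 1, 2, 4, 3, 1],
       [1, 3, 4, 2, 1, 5, 4, 3, 4, 3, 5, 1, 5, 1, 3, 2, 3, 5, 2, 1, 3, 1, 4, 3, 2, 5]].
     length xs = m \<and> locating_word xs \<and> set xs \<subseteq> {1..5}"
  by code_simp+

lemma locating_words_exist: "2 \<le> k \<Longrightarrow> locating_words_exist k"
proof (induction k rule: dec_induct)
  case base
  have "locating_word [1, 2]" by code_simp
  then show ?case by (auto simp: locating_words_exist_def intro!: exI[of _ "[1, 2]"])
next
  case (step k)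
  then obtain i where k: "k = i + 2" by (metis le_add_diff_inverse2)
  have "\<exists>xs. locating_word xs \<and> length xs = m \<and> set xs \<subseteq> {1..i+3}"
    if range: "(i + 2)^2 * (i + 1) < 2 * m" "2 * m \<le> 3 * (i + 2)^2 + (i + 2)" for m
  proof -
    have "i \<le> 2"
    proof (rule ccontr)
      assume "\<not> i \<le> 2"
      then have "(i + 2)^2 * 4 \<le> (i + 2)^2 * (i + 1)" by (intro mult_le_mono) auto
      moreover have "i + 2 \<le> (i + 2)^2" by (simp add: power2_eq_square)
      ultimately show False using range by linarith
    qed
    then consider "i = 0" "m \<in> {3..7}" | "i = 1" "m \<in> {10..15}" | "i = 2" "m \<in> {25..26}"
      using range by (auto simp: power2_eq_square le_Suc_eq numeral_eq_Suc)
    then show ?thesis using short_locating_words by cases (fastforce simp: eval_nat_numeral)+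
  qed
  then have "locating_words_exist (i + 3)"
    using step.IH k by (intro locating_words_exist_step) simp_all
  moreover have "Suc k = i + 3" using k by simp
  ultimately show ?case by (simp only:)
qed

section \<open>The join of two paths\<close>

definition least_colours :: "nat \<Rightarrow> nat" where
  "least_colours m = (LEAST k. 2 * m \<le> k^2 * (k - 1))"

lemma least_colours_real: "(LEAST k::nat. real m \<le> (real k ^ 3 - real k ^ 2) / 2) = least_colours m"
proof -
  have "real m \<le> (real k ^ 3 - real k ^ 2) / 2 \<longleftrightarrow> 2 * m \<le> k^2 * (k - 1)" for k
  proof (cases k)
    case (Suc j)
    then have "real (k^2 * (k - 1)) = real k ^ 3 - real k ^ 2"
      by (simp add: power2_eq_square power3_eq_cube algebra_simps)
    then have "real m \<le> (real k ^ 3 - real k ^ 2) / 2 \<longleftrightarrow> real (2 * m) \<le> real (k^2 * (k - 1))"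
      by (simp add: mult.commute)
    then show ?thesis by (simp only: of_nat_le_iff)
  qed simp
  then show ?thesis by (simp add: least_colours_def)
qed

lemma least_colours_le: "2 * m \<le> k^2 * (k - 1) \<Longrightarrow> least_colours m \<le> k"
  unfolding least_colours_def by (rule Least_le)

lemma least_colours:
  assumes "2 \<le> m"
  shows "2 * m \<le> least_colours m ^ 2 * (least_colours m - 1)" "2 \<le> least_colours m"
proof -
  have "2 * m \<le> m^2 * 1" using assms by (simp add: power2_eq_square)
  also have "\<dots> \<le> m^2 * (m - 1)" using assms by (intro mult_le_mono2) simp
  finally show bound: "2 * m \<le> least_colours m ^ 2 * (least_colours m - 1)"
    unfolding least_colours_def by (rule LeastI)
  show "2 \<le> least_colours m"
  proof (rule ccontr)
    assume "\<not> 2 \<le> least_colours m"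
    then have "least_colours m \<le> 1" by simp
    then show False using bound assms by (auto simp: le_Suc_eq)
  qed
qed

lemma optimal_locating_word:
  assumes "2 \<le> m"
  obtains xs where "locating_word xs" "length xs = m" "set xs = {1..least_colours m}"
proof -
  obtain xs where xs: "locating_word xs" "length xs = m" "set xs \<subseteq> {1..least_colours m}"
    using locating_words_exist[OF least_colours(2)[OF assms]] least_colours(1)[OF assms] assms
    by (auto simp: locating_words_exist_def)
  have "2 * m \<le> card (set xs) ^ 2 * (card (set xs) - 1)"
    using nbr_locating_path_card_bound[OF assms, of "nth xs"] nbr_locating_nth[OF xs(1)]
      image_nth_path_V[of xs]
    by (simp add: xs(2))
  then have "least_colours m \<le> card (set xs)" by (rule least_colours_le)
  moreover have "card (set xs) \<le> least_colours m" using card_mono[OF _ xs(3)] by simp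
  ultimately have "card (set xs) = card {1..least_colours m}" by simp
  then have "set xs = {1..least_colours m}" by (rule card_subset_eq[OF finite_atLeastAtMost xs(3)])
  with xs that show ?thesis by blast
qed

lemma locating_coloring_join_paths_ge:
  assumes "2 \<le> m" "2 \<le> n"
    and "locating_coloring (join_V (path_V m) (path_V n)) (join_E path_E path_E) k f"
  shows "least_colours m + least_colours n \<le> k"
proof -
  have ne: "path_V m \<noteq> {}" "path_V n \<noteq> {}" using assms by (auto simp: path_V_def)
  have fin: "finite (path_V k)" for k by (simp add: path_V_def)
  note split = locating_coloring_join_split[OF fin fin ne assms(3)]
  have "least_colours m \<le> card ((f \<circ> Inl) ` path_V m)"
    using nbr_locating_path_card_bound[OF assms(1) split(1)] by (rule least_colours_le)
  moreover have "least_colours n \<le> card ((f \<circ> Inr) ` path_V n)"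
    using nbr_locating_path_card_bound[OF assms(2) split(2)] by (rule least_colours_le)
  ultimately show ?thesis using split(3) by linarith
qed

lemma locating_coloring_join_paths:
  assumes "2 \<le> m" "2 \<le> n"
  shows "\<exists>f. locating_coloring (join_V (path_V m) (path_V n)) (join_E path_E path_E)
    (least_colours m + least_colours n) f"
proof -
  obtain xs where xs: "locating_word xs" "length xs = m" "set xs = {1..least_colours m}"
    using optimal_locating_word[OF assms(1)] .
  obtain ys where ys: "locating_word ys" "length ys = n" "set ys = {1..least_colours n}"
    using optimal_locating_word[OF assms(2)] .
  have "finite (path_V k)" "path_V k \<noteq> {}" if "2 \<le> k" for k
    using that by (auto simp: path_V_def)
  then show ?thesis
    using locating_coloring_join_combine[of "path_V m" "path_V n" path_E "nth xs" "least_colours m"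
        path_E "nth ys" "least_colours n"] nbr_locating_nth[OF xs(1)] nbr_locating_nth[OF ys(1)]
      image_nth_path_V[of xs] image_nth_path_V[of ys] xs ys assms
    by auto
qed

theorem corollary3:
  fixes m n :: nat
  assumes "m \<ge> 2" and "n \<ge> 2"
  shows "locating_chromatic_number (join_V (path_V m) (path_V n)) (join_E path_E path_E)
       = (LEAST k::nat. real m \<le> (real k ^ 3 - real k ^ 2) / 2)
       + (LEAST k::nat. real n \<le> (real k ^ 3 - real k ^ 2) / 2)"
  unfolding locating_chromatic_number_def least_colours_real
  using locating_coloring_join_paths[OF assms] locating_coloring_join_paths_ge[OF assms]
  by (intro Least_equality) auto

end
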